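(* Assume Assumption A, let $\mathscr E$ be the union of the recurrent classes of the limiting chain $X_R$ and $\Delta=E\setminus\mathscr E$ its set of transient states. Then for every $\eta\in\Delta$, $$\lim_{t\to\infty}\limsup_{N\to\infty}\mathbb P_\eta\big[H_{\mathscr E}\ge t\,\alpha_N\big]=0.$$
   Context: Setting: $E$ is a fixed finite set; for each $N\ge1$, $(\eta^N_t)$ is a continuous-time irreducible Markov chain on $E$ with jump rates $R_N(\eta,\xi)$; $\mathbb P_\eta$ is its law started at $\eta$ and $H_A=\inf\{t>0:\eta^N_t\in A\}$. Ordered families: a finite family of sequences of positive reals $(a^r_N)$, $r\in\mathfrak R$, is ordered if for all $r\neq s$, $\arctan(a^r_N/a^s_N)$ converges. Assumption A: (i) for each $\eta\neq\xi$, either $R_N(\eta,\xi)=0$ for all $N$ or $R_N(\eta,\xi)>0$ for all $N$; let $\mathbb B$ be the set of pairs with positive rates. (ii) For every $m\ge1$ the family $\prod_{(\eta,\xi)\in\mathbb B}R_N(\eta,\xi)^{k(\eta,\xi)}$, $k:\mathbb B\to\mathbb Z_+$ with $\sum k=m$, is ordered. Limiting chain: $\alpha_N^{-1}=\sum_\eta\sum_{\xi\ne\eta}R_N(\eta,\xi)$; $R(\eta,\xi)=\lim_N\alpha_NR_N(\eta,\xi)\in[0,1]$ (exists under Assumption A); $X_R$ is the Markov chain on $E$ with rates $R$. *)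

theory Defs
  imports "HOL-Probability.Probability"
begin

text \<open>Off-diagonal rates of a chain on a finite state type; the diagonal entries of a rate
  function are ignored everywhere.\<close>

definition generator :: "('e::finite \<Rightarrow> 'e \<Rightarrow> real) \<Rightarrow> 'e \<Rightarrow> 'e \<Rightarrow> real" where
  "generator R x y = (if x = y then - (\<Sum>z\<in>UNIV - {x}. R x z) else R x y)"

fun matpow :: "('e::finite \<Rightarrow> 'e \<Rightarrow> real) \<Rightarrow> nat \<Rightarrow> 'e \<Rightarrow> 'e \<Rightarrow> real" where
  "matpow Q 0 x y = (if x = y then 1 else 0)"
| "matpow Q (Suc k) x y = (\<Sum>z\<in>UNIV. matpow Q k x z * Q z y)"

definition trans_fn :: "('e::finite \<Rightarrow> 'e \<Rightarrow> real) \<Rightarrow> real \<Rightarrow> 'e \<Rightarrow> 'e \<Rightarrow> real" where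
  "trans_fn R t x y = (\<Sum>k. t ^ k / fact k * matpow (generator R) k x y)"

definition ctmc :: "('e::finite \<Rightarrow> 'e \<Rightarrow> real) \<Rightarrow> 'e \<Rightarrow> 'a measure \<Rightarrow> (real \<Rightarrow> 'a \<Rightarrow> 'e) \<Rightarrow> bool" where
  "ctmc R x0 M X \<longleftrightarrow>
     prob_space M \<and>
     (\<forall>t\<ge>0. X t \<in> measurable M (count_space UNIV)) \<and>
     (\<forall>\<omega>\<in>space M. \<forall>t\<ge>0. \<exists>\<delta>>0. \<forall>s. t \<le> s \<and> s < t + \<delta> \<longrightarrow> X s \<omega> = X t \<omega>) \<and>
     (\<forall>(n::nat) (ts::nat \<Rightarrow> real) (xs::nat \<Rightarrow> 'e).
        ts 0 = 0 \<and> (\<forall>i<n. ts i \<le> ts (Suc i)) \<longrightarrow>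
        measure M {\<omega>\<in>space M. \<forall>i\<le>n. X (ts i) \<omega> = xs i}
          = (if xs 0 = x0 then 1 else 0) * (\<Prod>i<n. trans_fn R (ts (Suc i) - ts i) (xs i) (xs (Suc i))))"

text \<open>Hitting time H_A = inf{t > 0 : X_t \<in> A}, with inf of the empty set = \<infinity>.\<close>
definition hit :: "(real \<Rightarrow> 'a \<Rightarrow> 'e) \<Rightarrow> 'e set \<Rightarrow> 'a \<Rightarrow> ereal" where
  "hit X A \<omega> = Inf (ereal ` {t. t > 0 \<and> X t \<omega> \<in> A})"

definition irreducible :: "('e \<Rightarrow> 'e \<Rightarrow> real) \<Rightarrow> bool" where
  "irreducible R \<longleftrightarrow> (\<forall>x y. (x, y) \<in> {(a, b). a \<noteq> b \<and> R a b > 0}\<^sup>*)"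

definition ordered_family :: "'r set \<Rightarrow> ('r \<Rightarrow> nat \<Rightarrow> real) \<Rightarrow> bool" where
  "ordered_family I a \<longleftrightarrow> (\<forall>r\<in>I. \<forall>s\<in>I. r \<noteq> s \<longrightarrow> convergent (\<lambda>N. arctan (a r N / a s N)))"

definition posB :: "(nat \<Rightarrow> 'e \<Rightarrow> 'e \<Rightarrow> real) \<Rightarrow> ('e \<times> 'e) set" where
  "posB R = {(x, y). x \<noteq> y \<and> (\<forall>N. R N x y > 0)}"

definition assumptionA :: "(nat \<Rightarrow> 'e::finite \<Rightarrow> 'e \<Rightarrow> real) \<Rightarrow> bool" where
  "assumptionA R \<longleftrightarrow>
     (\<forall>x y. x \<noteq> y \<longrightarrow> (\<forall>N. R N x y = 0) \<or> (\<forall>N. R N x y > 0)) \<and>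
     (\<forall>m::nat. m \<ge> 1 \<longrightarrow>
        ordered_family {k :: 'e \<times> 'e \<Rightarrow> nat. (\<forall>p. p \<notin> posB R \<longrightarrow> k p = 0) \<and> sum k (posB R) = m}
          (\<lambda>k N. \<Prod>p\<in>posB R. R N (fst p) (snd p) ^ k p))"

definition alpha :: "(nat \<Rightarrow> 'e::finite \<Rightarrow> 'e \<Rightarrow> real) \<Rightarrow> nat \<Rightarrow> real" where
  "alpha R N = 1 / (\<Sum>x\<in>UNIV. \<Sum>y\<in>UNIV - {x}. R N x y)"

definition Rlim :: "(nat \<Rightarrow> 'e::finite \<Rightarrow> 'e \<Rightarrow> real) \<Rightarrow> 'e \<Rightarrow> 'e \<Rightarrow> real" where
  "Rlim R x y = lim (\<lambda>N. alpha R N * R N x y)"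

definition reach :: "('e \<Rightarrow> 'e \<Rightarrow> real) \<Rightarrow> ('e \<times> 'e) set" where
  "reach Q = {(a, b). a \<noteq> b \<and> Q a b > 0}\<^sup>*"

text \<open>Recurrent states of a finite-state chain with rates Q: states whose communicating
  class is closed.\<close>
definition recurrent_states :: "('e \<Rightarrow> 'e \<Rightarrow> real) \<Rightarrow> 'e set" where
  "recurrent_states Q = {x. \<forall>y. (x, y) \<in> reach Q \<longrightarrow> (y, x) \<in> reach Q}"

end

theory Submission
  imports Defs
begin

text \<open>Observe the chain with rates R_N at the times i h alpha_N. For small h, the second-order
  expansion of exp(t Q) shows that for large N one such step follows each edge (a, b) of the
  limiting chain with probability at least some p > 0. Every transient state is joined to the
  recurrent set by a path of such edges, so for large N the observed chain leaves Delta within m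
  steps with probability at least some epsilon > 0, from every transient state. By the
  finite-dimensional distributions, the probability of staying in Delta for k m steps is then at
  most (1 - epsilon)^k, and this bounds P[H >= t alpha_N] once t > k m h.\<close>

section \<open>Short-time expansion of the transition function\<close>

lemma matpow_scale:
  "matpow (\<lambda>x y. c * Q x y) k x y = c ^ k * matpow Q k x y"
  by (induction k arbitrary: y) (simp_all add: sum_distrib_left algebra_simps)

lemma abs_matpow_le:
  fixes Q :: "'e::finite \<Rightarrow> 'e \<Rightarrow> real"
  assumes "\<And>x y. \<bar>Q x y\<bar> \<le> 1"
  shows "\<bar>matpow Q k x y\<bar> \<le> real CARD('e) ^ k"
proof (induction k arbitrary: y)
  case 0
  then show ?case by simp
next
  case (Suc k)
  have "\<bar>matpow Q (Suc k) x y\<bar> \<le> (\<Sum>z\<in>UNIV. \<bar>matpow Q k x z\<bar> * \<bar>Q z y\<bar>)"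
    unfolding matpow.simps by (rule order_trans[OF sum_abs]) (simp add: abs_mult)
  also have "\<dots> \<le> (\<Sum>z\<in>(UNIV::'e set). real CARD('e) ^ k)"
    by (intro sum_mono order_trans[OF mult_left_le]) (use Suc assms in auto)
  finally show ?case by simp
qed

lemma exp_sums: "(\<lambda>k. c ^ k / fact k) sums exp (c::real)"
  using exp_converges[of c] by (simp add: divide_inverse mult.commute)

lemma abs_suminf_minus_two_terms_le:
  fixes b :: "nat \<Rightarrow> real"
  assumes b: "\<And>k. \<bar>b k\<bar> \<le> c ^ k / fact k" and c: "0 \<le> c"
  shows "\<bar>suminf b - b 0 - b 1\<bar> \<le> c\<^sup>2 * exp c"
proof -
  have "summable b"
    by (rule summable_rabs_cancel, rule summable_comparison_test[OF _ sums_summable[OF exp_sums]])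
       (use b in auto)
  then have "suminf b - b 0 - b 1 = (\<Sum>k. b (k + 2))"
    using suminf_split_initial_segment[of b 2] by (simp add: numeral_2_eq_2)
  also have "\<bar>\<dots>\<bar> \<le> (\<Sum>k. c\<^sup>2 * (c ^ k / fact k))"
  proof (rule norm_suminf_le[where 'a=real, unfolded real_norm_def])
    fix k
    have "\<bar>b (k + 2)\<bar> \<le> c ^ (k + 2) / fact (k + 2)" by (rule b)
    also have "\<dots> \<le> c ^ (k + 2) / fact k"
      by (rule divide_left_mono) (use c fact_mono[of k "k + 2", where 'a=real] in auto)
    finally show "\<bar>b (k + 2)\<bar> \<le> c\<^sup>2 * (c ^ k / fact k)"
      by (simp add: power_add power2_eq_square)
  qed (rule summable_mult[OF sums_summable[OF exp_sums]])
  also have "\<dots> = c\<^sup>2 * exp c"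
    using sums_unique[OF sums_mult[OF exp_sums]] by simp
  finally show ?thesis .
qed

lemma trans_fn_ge_first_order:
  fixes R :: "'e::finite \<Rightarrow> 'e \<Rightarrow> real"
  assumes Q: "\<And>x y. \<bar>a * generator R x y\<bar> \<le> 1" and h: "0 \<le> h" and xy: "x \<noteq> y"
  shows "h * a * R x y - (h * real CARD('e))\<^sup>2 * exp (h * real CARD('e)) \<le> trans_fn R (h * a) x y"
proof -
  define b where "b k = h ^ k / fact k * matpow (\<lambda>x y. a * generator R x y) k x y" for k
  have "trans_fn R (h * a) x y = suminf b"
    unfolding trans_fn_def b_def by (simp add: matpow_scale power_mult_distrib mult.assoc)
  moreover have "b 0 = 0" "b 1 = h * a * R x y"
    using xy by (simp_all add: b_def generator_def if_distrib[of "\<lambda>u. u * _"] cong: if_cong)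
  moreover have "\<bar>b k\<bar> \<le> (h * real CARD('e)) ^ k / fact k" for k
  proof -
    have "\<bar>b k\<bar> = h ^ k / fact k * \<bar>matpow (\<lambda>x y. a * generator R x y) k x y\<bar>"
      using h by (simp add: b_def abs_mult)
    also have "\<dots> \<le> h ^ k / fact k * real CARD('e) ^ k"
      by (rule mult_left_mono[OF abs_matpow_le]) (use Q h in auto)
    finally show ?thesis by (simp add: power_mult_distrib)
  qed
  then have "\<bar>suminf b - b 0 - b 1\<bar> \<le> (h * real CARD('e))\<^sup>2 * exp (h * real CARD('e))"
    by (rule abs_suminf_minus_two_terms_le) (use h in simp)
  ultimately show ?thesis by linarith
qed

section \<open>Survival of a sub-stochastic kernel in a set\<close>

text \<open>survival P D n x is the probability that the chain with kernel P started at x lies in D at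
  each of the steps 1, ..., n.\<close>
fun survival :: "('e::finite \<Rightarrow> 'e \<Rightarrow> real) \<Rightarrow> 'e set \<Rightarrow> nat \<Rightarrow> 'e \<Rightarrow> real" where
  "survival P D 0 x = 1"
| "survival P D (Suc n) x = (\<Sum>y\<in>D. P x y * survival P D n y)"

fun path_weight :: "('e \<Rightarrow> 'e \<Rightarrow> real) \<Rightarrow> 'e \<Rightarrow> 'e list \<Rightarrow> real" where
  "path_weight P x [] = 1"
| "path_weight P x (y # ys) = P x y * path_weight P y ys"

lemma path_weight_eq_prod:
  "path_weight P x ys = (\<Prod>i<length ys. P ((x # ys) ! i) ((x # ys) ! Suc i))"
  by (induction ys arbitrary: x) (simp_all add: prod.lessThan_Suc_shift del: prod.lessThan_Suc)

lemma survival_eq_sum_path_weight: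
  "survival P D n x = (\<Sum>ys | set ys \<subseteq> D \<and> length ys = n. path_weight P x ys)"
proof (induction n arbitrary: x)
  case 0
  have "{ys. set ys \<subseteq> D \<and> length ys = 0} = {[]}" by auto
  then show ?case by simp
next
  case (Suc n)
  let ?L = "{ys. set ys \<subseteq> D \<and> length ys = n}"
  have "(\<Sum>ys | set ys \<subseteq> D \<and> length ys = Suc n. path_weight P x ys)
      = (\<Sum>(ys, y)\<in>?L \<times> D. P x y * path_weight P y ys)"
    by (simp only: lists_length_Suc_eq sum.reindex[OF inj_split_Cons])
       (simp add: case_prod_unfold)
  also have "\<dots> = (\<Sum>y\<in>D. P x y * (\<Sum>ys\<in>?L. path_weight P y ys))"
    by (simp add: sum.cartesian_product[symmetric] sum.swap[of _ ?L] sum_distrib_left)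
  finally show ?case by (simp add: Suc)
qed

context
  fixes P :: "'e::finite \<Rightarrow> 'e \<Rightarrow> real"
  assumes nonneg: "\<And>x y. 0 \<le> P x y"
    and row_sum: "\<And>x. (\<Sum>y\<in>UNIV. P x y) \<le> 1"
begin

lemma survival_nonneg: "0 \<le> survival P D n x"
  by (induction n arbitrary: x) (simp_all add: sum_nonneg nonneg)

lemma row_sum_subset_le_1: "(\<Sum>y\<in>S. P x y) \<le> 1"
  using sum_mono2[of UNIV S "P x"] nonneg row_sum[of x] by auto

lemma survival_le_1: "survival P D n x \<le> 1"
proof (induction n arbitrary: x)
  case (Suc n)
  have "(\<Sum>y\<in>D. P x y * survival P D n y) \<le> (\<Sum>y\<in>D. P x y)"
    by (intro sum_mono mult_left_le) (simp_all add: Suc nonneg)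
  then show ?case using row_sum_subset_le_1[of x D] by simp
qed simp

lemma survival_Suc_le: "survival P D (Suc n) x \<le> survival P D n x"
proof (induction n arbitrary: x)
  case 0
  then show ?case by (simp add: row_sum_subset_le_1)
next
  case (Suc n)
  then show ?case by (simp add: sum_mono mult_left_mono nonneg)
qed

lemma survival_antimono: "n \<le> n' \<Longrightarrow> survival P D n' x \<le> survival P D n x"
  by (induction n' rule: dec_induct) (auto intro: order_trans[OF survival_Suc_le] simp del: survival.simps)

lemma survival_Suc_le_leave:
  assumes "y \<notin> D"
  shows "survival P D (Suc n) x \<le> 1 - P x y"
proof -
  have "survival P D (Suc n) x \<le> (\<Sum>z\<in>D. P x z)"
    by (auto intro!: sum_mono mult_left_le simp: survival_le_1 survival_nonneg nonneg)
  also have "\<dots> \<le> (\<Sum>z\<in>UNIV - {y}. P x z)"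
    by (rule sum_mono2) (use assms nonneg in auto)
  also have "\<dots> = (\<Sum>z\<in>UNIV. P x z) - P x y"
    by (simp add: sum_diff1)
  finally show ?thesis using row_sum[of x] by linarith
qed

lemma survival_Suc_le_step:
  assumes "y \<in> D"
  shows "survival P D (Suc n) x \<le> 1 - P x y * (1 - survival P D n y)"
proof -
  have "survival P D (Suc n) x = P x y * survival P D n y + (\<Sum>z\<in>D - {y}. P x z * survival P D n z)"
    using assms by (simp add: sum.remove)
  also have "(\<Sum>z\<in>D - {y}. P x z * survival P D n z) \<le> (\<Sum>z\<in>UNIV - {y}. P x z)"
    by (rule order_trans[OF sum_mono sum_mono2])
       (auto intro: mult_left_le simp: survival_le_1 survival_nonneg nonneg)
  also have "\<dots> = (\<Sum>z\<in>UNIV. P x z) - P x y"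
    by (simp add: sum_diff1)
  finally show ?thesis using row_sum[of x] by (simp add: algebra_simps)
qed

lemma survival_add_le:
  assumes "\<forall>y\<in>D. survival P D m y \<le> c" and "x \<in> D"
  shows "survival P D (n + m) x \<le> c * survival P D n x"
  using assms(2)
proof (induction n arbitrary: x)
  case (Suc n)
  have "survival P D (Suc n + m) x \<le> (\<Sum>y\<in>D. P x y * (c * survival P D n y))"
    by (auto intro!: sum_mono mult_left_mono Suc.IH nonneg)
  then show ?case by (simp add: sum_distrib_left algebra_simps)
qed (use assms(1) in simp)

lemma survival_mult_le_power:
  assumes "\<forall>y\<in>D. survival P D m y \<le> c" and "0 \<le> c" and "x \<in> D"
  shows "survival P D (k * m) x \<le> c ^ k"
proof (induction k)
  case (Suc k)
  have "survival P D (k * m + m) x \<le> c * survival P D (k * m) x"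
    by (rule survival_add_le[OF assms(1,3)])
  also have "\<dots> \<le> c * c ^ k"
    by (rule mult_left_mono[OF Suc assms(2)])
  finally show ?case by (simp add: add.commute)
qed simp

end

context
  fixes P :: "nat \<Rightarrow> 'e::finite \<Rightarrow> 'e \<Rightarrow> real" and G :: "('e \<times> 'e) set" and p :: real
  assumes nonneg: "\<And>N x y. 0 \<le> P N x y"
    and row_sum: "\<And>N x. (\<Sum>y\<in>UNIV. P N x y) \<le> 1"
    and edge: "\<And>a b. (a, b) \<in> G \<Longrightarrow> \<forall>\<^sub>F N in sequentially. p \<le> P N a b"
    and p: "0 < p"
begin

lemma eventually_survival_le_along_path:
  assumes "(x, e) \<in> G\<^sup>*" "e \<notin> D" "x \<in> D"
  shows "\<exists>j \<epsilon>. 0 < \<epsilon> \<and> (\<forall>\<^sub>F N in sequentially. survival (P N) D j x \<le> 1 - \<epsilon>)"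
  using assms(1,3)
proof (induction rule: converse_rtrancl_induct)
  case base
  with assms(2) show ?case by simp
next
  case (step x y)
  show ?case
  proof (cases "y \<in> D")
    case False
    from edge[OF step(1)] have "\<forall>\<^sub>F N in sequentially. survival (P N) D 1 x \<le> 1 - p"
    proof eventually_elim
      case (elim N)
      have "survival (P N) D (Suc 0) x \<le> 1 - P N x y"
        by (rule survival_Suc_le_leave[OF nonneg[of N] row_sum[of N] False])
      with elim show ?case by simp
    qed
    with p show ?thesis by blast
  next
    case True
    then obtain j \<epsilon> where \<epsilon>: "0 < \<epsilon>" and j: "\<forall>\<^sub>F N in sequentially. survival (P N) D j y \<le> 1 - \<epsilon>"
      using step.IH by blast
    from edge[OF step(1)] j have "\<forall>\<^sub>F N in sequentially. survival (P N) D (Suc j) x \<le> 1 - p * \<epsilon>"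
    proof eventually_elim
      case (elim N)
      have "survival (P N) D (Suc j) x \<le> 1 - P N x y * (1 - survival (P N) D j y)"
        by (rule survival_Suc_le_step[OF nonneg[of N] row_sum[of N] True])
      also have "\<dots> \<le> 1 - p * \<epsilon>"
        using elim p \<epsilon> by (simp add: mult_mono)
      finally show ?case .
    qed
    with p \<epsilon> show ?thesis
      by (intro exI[of _ "Suc j"] exI[of _ "p * \<epsilon>"]) simp
  qed
qed

lemma survival_decays_geometrically:
  assumes escape: "\<And>x. x \<in> D \<Longrightarrow> \<exists>e. e \<notin> D \<and> (x, e) \<in> G\<^sup>*"
  shows "\<exists>m \<epsilon>. 0 < \<epsilon> \<and> \<epsilon> \<le> 1 \<and>
    (\<forall>k. \<forall>\<^sub>F N in sequentially. \<forall>x\<in>D. survival (P N) D (k * m) x \<le> (1 - \<epsilon>) ^ k)"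
proof -
  have "\<exists>j \<epsilon>. 0 < \<epsilon> \<and> (\<forall>\<^sub>F N in sequentially. survival (P N) D j x \<le> 1 - \<epsilon>)" if x: "x \<in> D" for x
  proof -
    obtain e where "e \<notin> D" "(x, e) \<in> G\<^sup>*"
      using escape[OF x] by blast
    from eventually_survival_le_along_path[OF this(2,1) x] show ?thesis .
  qed
  then have "\<forall>x\<in>D. \<exists>j \<epsilon>. 0 < \<epsilon> \<and> (\<forall>\<^sub>F N in sequentially. survival (P N) D j x \<le> 1 - \<epsilon>)"
    by blast
  from bchoice[OF this] obtain j where
    "\<forall>x\<in>D. \<exists>\<epsilon>. 0 < \<epsilon> \<and> (\<forall>\<^sub>F N in sequentially. survival (P N) D (j x) x \<le> 1 - \<epsilon>)" ..
  from bchoice[OF this] obtain \<epsilon> where j: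
    "\<forall>x\<in>D. 0 < \<epsilon> x \<and> (\<forall>\<^sub>F N in sequentially. survival (P N) D (j x) x \<le> 1 - \<epsilon> x)" ..
  define m where "m = Max (j ` D)"
  define \<epsilon>0 where "\<epsilon>0 = Min (insert 1 (\<epsilon> ` D))"
  have \<epsilon>0: "0 < \<epsilon>0" "\<epsilon>0 \<le> 1" "\<And>x. x \<in> D \<Longrightarrow> \<epsilon>0 \<le> \<epsilon> x"
    using j by (auto simp: \<epsilon>0_def)
  have "\<forall>\<^sub>F N in sequentially. \<forall>x\<in>D. survival (P N) D (j x) x \<le> 1 - \<epsilon> x"
    using j by (intro eventually_ball_finite) auto
  then have "\<forall>\<^sub>F N in sequentially. \<forall>x\<in>D. survival (P N) D (k * m) x \<le> (1 - \<epsilon>0) ^ k" for k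
  proof eventually_elim
    case (elim N)
    have "survival (P N) D m x \<le> 1 - \<epsilon>0" if x: "x \<in> D" for x
    proof -
      have "survival (P N) D m x \<le> survival (P N) D (j x) x"
        by (rule survival_antimono[OF nonneg[of N] row_sum[of N]]) (simp add: m_def x)
      also have "\<dots> \<le> 1 - \<epsilon> x"
        using elim x by blast
      finally show ?thesis
        using \<epsilon>0(3)[OF x] by linarith
    qed
    then show ?case
      using \<epsilon>0(2) by (auto intro!: survival_mult_le_power[OF nonneg[of N] row_sum[of N]])
  qed
  with \<epsilon>0 show ?thesis by blast
qed

end

section \<open>Chains observed on a grid\<close>

lemma ctmc_prob_space: "ctmc R x0 M X \<Longrightarrow> prob_space M"
  unfolding ctmc_def by blast

lemma ctmc_measure_fdd:
  assumes "ctmc R x0 M X" "ts 0 = 0" "\<forall>i<n. ts i \<le> ts (Suc i)"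
  shows "measure M {\<omega>\<in>space M. \<forall>i\<le>n. X (ts i) \<omega> = xs i}
    = (if xs 0 = x0 then 1 else 0) * (\<Prod>i<n. trans_fn R (ts (Suc i) - ts i) (xs i) (xs (Suc i)))"
  using assms unfolding ctmc_def by blast

lemma ctmc_sets_Collect:
  assumes "ctmc R x0 M X" "0 \<le> t"
  shows "{\<omega>\<in>space M. Q (X t \<omega>)} \<in> sets M"
proof -
  have "X t \<in> measurable M (count_space UNIV)"
    using assms unfolding ctmc_def by blast
  from measurable_sets[OF this, of "Collect Q"] show ?thesis
    by (simp add: vimage_def Int_def conj_commute)
qed

lemma ctmc_sets_Collect_grid:
  assumes "ctmc R x0 M X" "0 \<le> \<delta>" "finite I"
  shows "{\<omega>\<in>space M. \<forall>i\<in>I. Q i (X (real i * \<delta>) \<omega>)} \<in> sets M"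
  using assms by (intro sets.sets_Collect_finite_All ctmc_sets_Collect) auto

lemma ctmc_measure_transition:
  assumes "ctmc R x M X" "0 \<le> s"
  shows "measure M {\<omega>\<in>space M. X 0 \<omega> = x \<and> X s \<omega> = y} = trans_fn R s x y"
  using ctmc_measure_fdd[OF assms(1), of "\<lambda>i. if i = 0 then 0 else s" 1 "\<lambda>i. if i = 0 then x else y"] assms(2)
  by (simp add: le_Suc_eq all_conj_distrib)

lemma trans_fn_nonneg:
  assumes "ctmc R x M X" "0 \<le> s"
  shows "0 \<le> trans_fn R s x y"
  using measure_nonneg ctmc_measure_transition[OF assms, of y, symmetric] by simp

lemma sum_trans_fn_le_1:
  fixes R :: "'e::finite \<Rightarrow> 'e \<Rightarrow> real"
  assumes c: "ctmc R x M X" and s: "0 \<le> s"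
  shows "(\<Sum>y\<in>UNIV. trans_fn R s x y) \<le> 1"
proof -
  interpret prob_space M by (rule ctmc_prob_space[OF c])
  let ?A = "\<lambda>y. {\<omega>\<in>space M. X 0 \<omega> = x \<and> X s \<omega> = y}"
  have "(\<Sum>y\<in>UNIV. trans_fn R s x y) = (\<Sum>y\<in>UNIV. prob (?A y))"
    using ctmc_measure_transition[OF c s] by simp
  also have "\<dots> = prob (\<Union>y. ?A y)"
    by (rule finite_measure_finite_Union[symmetric])
       (auto simp: disjoint_family_on_def intro!: sets.sets_Collect_conj ctmc_sets_Collect[OF c] s)
  also have "\<dots> \<le> 1" by (rule prob_le_1)
  finally show ?thesis .
qed

lemma ctmc_measure_path:
  assumes c: "ctmc R x0 M X" and "0 \<le> \<delta>"
  shows "measure M {\<omega>\<in>space M. \<forall>i\<le>length ys. X (real i * \<delta>) \<omega> = (z # ys) ! i}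
    = (if z = x0 then 1 else 0) * path_weight (trans_fn R \<delta>) z ys"
proof -
  have "real i * \<delta> \<le> real (Suc i) * \<delta>" for i
    using assms(2) by (simp add: mult_right_mono)
  then have "measure M {\<omega>\<in>space M. \<forall>i\<le>length ys. X (real i * \<delta>) \<omega> = (z # ys) ! i}
    = (if (z # ys) ! 0 = x0 then 1 else 0) *
      (\<Prod>i<length ys. trans_fn R (real (Suc i) * \<delta> - real i * \<delta>) ((z # ys) ! i) ((z # ys) ! Suc i))"
    by (intro ctmc_measure_fdd[OF c]) auto
  then show ?thesis
    by (simp add: path_weight_eq_prod ring_distribs)
qed

lemma grid_stay_subset_paths:
  "{\<omega>\<in>S. \<forall>i\<in>{1..n}. X (real i * \<delta>) \<omega> \<in> D}
    \<subseteq> (\<Union>z. \<Union>ys\<in>{ys. set ys \<subseteq> D \<and> length ys = n}. {\<omega>\<in>S. \<forall>i\<le>n. X (real i * \<delta>) \<omega> = (z # ys) ! i})"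
proof safe
  fix \<omega> assume \<omega>: "\<omega> \<in> S" "\<forall>i\<in>{1..n}. X (real i * \<delta>) \<omega> \<in> D"
  define ys where "ys = map (\<lambda>i. X (real (Suc i) * \<delta>) \<omega>) [0..<n]"
  have "set ys \<subseteq> D \<and> length ys = n"
    using \<omega>(2) by (auto simp: ys_def simp del: of_nat_Suc)
  moreover have "X (real i * \<delta>) \<omega> = (X 0 \<omega> # ys) ! i" if "i \<le> n" for i
    using that by (cases i) (simp_all add: ys_def del: of_nat_Suc)
  ultimately show "\<omega> \<in> (\<Union>z. \<Union>ys\<in>{ys. set ys \<subseteq> D \<and> length ys = n}. {\<omega>\<in>S. \<forall>i\<le>n. X (real i * \<delta>) \<omega> = (z # ys) ! i})"
    using \<omega>(1) by blast
qed

lemma ctmc_measure_stay_le_survival: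
  fixes R :: "'e::finite \<Rightarrow> 'e \<Rightarrow> real"
  assumes c: "ctmc R x0 M X" and \<delta>: "0 \<le> \<delta>"
  shows "measure M {\<omega>\<in>space M. \<forall>i\<in>{1..n}. X (real i * \<delta>) \<omega> \<in> D}
    \<le> survival (trans_fn R \<delta>) D n x0"
proof -
  interpret prob_space M by (rule ctmc_prob_space[OF c])
  define L where "L = {ys. set ys \<subseteq> D \<and> length ys = n}"
  have L: "finite L"
    by (simp add: L_def finite_lists_length_eq)
  define A where "A z ys = {\<omega>\<in>space M. \<forall>i\<le>n. X (real i * \<delta>) \<omega> = (z # ys) ! i}" for z ys
  have A_sets: "A z ys \<in> sets M" for z ys
  proof -
    have "A z ys = {\<omega>\<in>space M. \<forall>i\<in>{..n}. X (real i * \<delta>) \<omega> = (z # ys) ! i}"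
      by (auto simp: A_def)
    also have "\<dots> \<in> sets M"
      by (rule ctmc_sets_Collect_grid[OF c \<delta>]) simp
    finally show ?thesis .
  qed
  have "{\<omega>\<in>space M. \<forall>i\<in>{1..n}. X (real i * \<delta>) \<omega> \<in> D} \<subseteq> (\<Union>z. \<Union>ys\<in>L. A z ys)"
    unfolding L_def A_def by (rule grid_stay_subset_paths)
  then have "prob {\<omega>\<in>space M. \<forall>i\<in>{1..n}. X (real i * \<delta>) \<omega> \<in> D} \<le> prob (\<Union>z. \<Union>ys\<in>L. A z ys)"
    by (intro finite_measure_mono sets.finite_UN) (simp_all add: L A_sets)
  also have "\<dots> \<le> (\<Sum>z\<in>UNIV. prob (\<Union>ys\<in>L. A z ys))"
    by (intro finite_measure_subadditive_finite) (auto intro: sets.finite_UN L A_sets)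
  also have "\<dots> \<le> (\<Sum>z\<in>UNIV. \<Sum>ys\<in>L. prob (A z ys))"
    by (intro sum_mono finite_measure_subadditive_finite) (auto simp: L A_sets)
  also have "\<dots> = (\<Sum>z\<in>UNIV. \<Sum>ys\<in>L. (if z = x0 then 1 else 0) * path_weight (trans_fn R \<delta>) z ys)"
  proof (intro sum.cong refl)
    fix z ys assume "ys \<in> L"
    then have "n = length ys" by (simp add: L_def)
    then show "prob (A z ys) = (if z = x0 then 1 else 0) * path_weight (trans_fn R \<delta>) z ys"
      unfolding A_def by (simp only: ctmc_measure_path[OF c \<delta>])
  qed
  also have "\<dots> = (\<Sum>ys\<in>L. path_weight (trans_fn R \<delta>) x0 ys)"
    by (subst sum.swap) (simp add: if_distrib[of "\<lambda>u. u * _"] cong: if_cong)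
  also have "\<dots> = survival (trans_fn R \<delta>) D n x0"
    by (simp add: L_def survival_eq_sum_path_weight)
  finally show ?thesis .
qed

lemma hit_le: "0 < s \<Longrightarrow> X s \<omega> \<in> A \<Longrightarrow> hit X A \<omega> \<le> ereal s"
  unfolding hit_def by (rule Inf_lower) auto

lemma ctmc_hit_ge_le_survival:
  fixes R :: "'e::finite \<Rightarrow> 'e \<Rightarrow> real"
  assumes c: "ctmc R x0 M X" and \<delta>: "0 < \<delta>" and s: "real n * \<delta> < s"
  shows "measure M {\<omega>\<in>space M. ereal s \<le> hit X A \<omega>} \<le> survival (trans_fn R \<delta>) (- A) n x0"
proof -
  interpret prob_space M by (rule ctmc_prob_space[OF c])
  have "{\<omega>\<in>space M. ereal s \<le> hit X A \<omega>} \<subseteq> {\<omega>\<in>space M. \<forall>i\<in>{1..n}. X (real i * \<delta>) \<omega> \<in> - A}"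
  proof safe
    fix \<omega> i assume hit: "ereal s \<le> hit X A \<omega>" and i: "i \<in> {1..n}" and A: "X (real i * \<delta>) \<omega> \<in> A"
    have "hit X A \<omega> \<le> ereal (real i * \<delta>)"
      by (rule hit_le) (use i \<delta> A in auto)
    also have "ereal (real i * \<delta>) \<le> ereal (real n * \<delta>)"
      using i \<delta> by (simp add: mult_right_mono)
    finally have "ereal s \<le> ereal (real n * \<delta>)"
      using hit by (rule order_trans[rotated])
    with s show False by simp
  qed
  then have "measure M {\<omega>\<in>space M. ereal s \<le> hit X A \<omega>}
      \<le> measure M {\<omega>\<in>space M. \<forall>i\<in>{1..n}. X (real i * \<delta>) \<omega> \<in> - A}"
    by (intro finite_measure_mono ctmc_sets_Collect_grid[OF c])
       (use \<delta> in auto)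
  also have "\<dots> \<le> survival (trans_fn R \<delta>) (- A) n x0"
    by (rule ctmc_measure_stay_le_survival[OF c]) (use \<delta> in simp)
  finally show ?thesis .
qed

lemma eventually_hit_tail_le:
  fixes R :: "nat \<Rightarrow> 'e::finite \<Rightarrow> 'e \<Rightarrow> real" and \<alpha> :: "nat \<Rightarrow> real"
  assumes chain: "\<And>N. ctmc (R N) x0 (M N) (X N)" and \<alpha>: "\<And>N. 0 < \<alpha> N" and h: "0 < h"
    and x0: "x0 \<notin> A"
    and decay: "\<forall>\<^sub>F N in sequentially. \<forall>x\<in>- A. survival (trans_fn (R N) (h * \<alpha> N)) (- A) n x \<le> c"
  shows "\<forall>\<^sub>F t in at_top. \<forall>\<^sub>F N in sequentially.
    measure (M N) {\<omega> \<in> space (M N). ereal (t * \<alpha> N) \<le> hit (X N) A \<omega>} \<le> c"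
  using eventually_gt_at_top[of "real n * h"]
proof eventually_elim
  case t: (elim t)
  from decay show ?case
  proof eventually_elim
    case (elim N)
    have "real n * (h * \<alpha> N) < t * \<alpha> N"
      using t \<alpha>[of N] by (simp add: mult.assoc[symmetric])
    then have "measure (M N) {\<omega> \<in> space (M N). ereal (t * \<alpha> N) \<le> hit (X N) A \<omega>}
        \<le> survival (trans_fn (R N) (h * \<alpha> N)) (- A) n x0"
      by (intro ctmc_hit_ge_le_survival[OF chain]) (simp_all add: h \<alpha>)
    also have "\<dots> \<le> c"
      using elim x0 by blast
    finally show ?case .
  qed
qed

section \<open>Limiting rates\<close>

lemma convergent_arctan_imp_convergent_or_at_top:
  fixes f :: "nat \<Rightarrow> real"
  assumes pos: "\<And>N. 0 < f N" and conv: "convergent (\<lambda>N. arctan (f N))"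
  shows "convergent f \<or> filterlim f at_top sequentially"
proof -
  obtain \<theta> where \<theta>: "(\<lambda>N. arctan (f N)) \<longlonglongrightarrow> \<theta>"
    using conv unfolding convergent_def by blast
  have "\<theta> \<le> pi / 2"
    by (rule LIMSEQ_le_const2[OF \<theta>]) (use arctan_ubound less_imp_le in blast)
  moreover have "0 \<le> \<theta>"
    by (rule LIMSEQ_le_const[OF \<theta>]) (use pos arctan_less_iff[of 0] in \<open>auto intro: less_imp_le\<close>)
  ultimately consider "0 \<le> \<theta>" "\<theta> < pi / 2" | "\<theta> = pi / 2" by linarith
  then show ?thesis
  proof cases
    case 1
    then have "0 < cos \<theta>"
      by (intro cos_gt_zero_pi) auto
    then have "isCont tan \<theta>"
      by (intro isCont_tan) simp
    from isCont_tendsto_compose[OF this \<theta>] have "f \<longlonglongrightarrow> tan \<theta>"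
      by (simp add: tan_arctan)
    then show ?thesis by (auto simp: convergent_def)
  next
    case 2
    have "\<forall>\<^sub>F N in sequentially. Z < f N" for Z
    proof -
      have "arctan Z < \<theta>" using arctan_ubound[of Z] 2 by simp
      from order_tendstoD(1)[OF \<theta> this] show ?thesis by (simp add: arctan_less_iff)
    qed
    then show ?thesis by (simp add: filterlim_at_top_dense)
  qed
qed

lemma convergent_inverse_sum:
  fixes f :: "'q \<Rightarrow> nat \<Rightarrow> real"
  assumes I: "finite I" "p \<in> I" and one: "\<And>N. f p N = 1"
    and nonneg: "\<And>q N. q \<in> I \<Longrightarrow> 0 \<le> f q N"
    and lim: "\<And>q. q \<in> I \<Longrightarrow> convergent (f q) \<or> filterlim (f q) at_top sequentially"
  shows "convergent (\<lambda>N. 1 / (\<Sum>q\<in>I. f q N))"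
proof (cases "\<forall>q\<in>I. convergent (f q)")
  case True
  then have lim_f: "f q \<longlonglongrightarrow> lim (f q)" if "q \<in> I" for q
    using that by (simp add: convergent_LIMSEQ_iff)
  have "lim (f q) \<ge> 0" if "q \<in> I" for q
    using that nonneg by (intro LIMSEQ_le_const[OF lim_f]) auto
  moreover have "lim (f p) = 1"
    using limI[OF tendsto_const, of 1] one by (metis ext)
  ultimately have "(\<Sum>q\<in>I. lim (f q)) \<noteq> 0"
    using member_le_sum[OF I(2), of "\<lambda>q. lim (f q)"] I(1) by fastforce
  with tendsto_sum[OF lim_f] have "(\<lambda>N. 1 / (\<Sum>q\<in>I. f q N)) \<longlonglongrightarrow> 1 / (\<Sum>q\<in>I. lim (f q))"
    by (intro tendsto_divide tendsto_const) auto
  then show ?thesis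
    unfolding convergent_def by blast
next
  case False
  then obtain q where q: "q \<in> I" "filterlim (f q) at_top sequentially"
    using lim by blast
  have "filterlim (\<lambda>N. \<Sum>q\<in>I. f q N) at_top sequentially"
    by (rule filterlim_at_top_mono[OF q(2)])
       (use I q nonneg in \<open>auto intro!: always_eventually member_le_sum\<close>)
  from tendsto_inverse_0_at_top[OF this] show ?thesis
    unfolding convergent_def by (auto simp: inverse_eq_divide)
qed

lemma assumptionA_convergent_arctan_ratio:
  fixes R :: "nat \<Rightarrow> 'e::finite \<Rightarrow> 'e \<Rightarrow> real"
  assumes A: "assumptionA R" and pq: "p \<in> posB R" "q \<in> posB R"
  shows "convergent (\<lambda>N. arctan (R N (fst q) (snd q) / R N (fst p) (snd p)))"
proof (cases "p = q")
  case True
  have "R N (fst p) (snd p) \<noteq> 0" for N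
    using pq(1) unfolding posB_def by (metis (mono_tags, lifting) case_prod_unfold less_irrefl mem_Collect_eq)
  then show ?thesis using True by (simp add: convergent_const)
next
  case False
  define single where "single r = (\<lambda>p'. if p' = r then 1 else 0 :: nat)" for r :: "'e \<times> 'e"
  have single_prod: "(\<Prod>p'\<in>posB R. R N (fst p') (snd p') ^ single r p') = R N (fst r) (snd r)"
    if "r \<in> posB R" for r N
    using that by (simp add: single_def if_distrib[of "\<lambda>k. _ ^ k"] cong: if_cong)
  define K where "K = {k :: 'e \<times> 'e \<Rightarrow> nat. (\<forall>p. p \<notin> posB R \<longrightarrow> k p = 0) \<and> sum k (posB R) = 1}"
  have "ordered_family K (\<lambda>k N. \<Prod>p\<in>posB R. R N (fst p) (snd p) ^ k p)"
    using A unfolding assumptionA_def K_def by simp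
  moreover have "single p \<in> K" "single q \<in> K"
    using pq by (auto simp: K_def single_def)
  moreover have "single q \<noteq> single p"
    using False by (metis single_def zero_neq_one)
  ultimately have "convergent (\<lambda>N. arctan ((\<Prod>p'\<in>posB R. R N (fst p') (snd p') ^ single q p')
      / (\<Prod>p'\<in>posB R. R N (fst p') (snd p') ^ single p p')))"
    unfolding ordered_family_def by blast
  then show ?thesis
    by (simp only: single_prod pq)
qed

lemma alpha_mult_rate_eq:
  fixes R :: "nat \<Rightarrow> 'e::finite \<Rightarrow> 'e \<Rightarrow> real"
  assumes "R N x y \<noteq> 0"
  shows "alpha R N * R N x y = 1 / (\<Sum>q\<in>(SIGMA a:UNIV. UNIV - {a}). R N (fst q) (snd q) / R N x y)"
proof -
  have "(\<Sum>a\<in>UNIV. \<Sum>b\<in>UNIV - {a}. R N a b) = (\<Sum>q\<in>(SIGMA a:UNIV. UNIV - {a}). R N (fst q) (snd q))"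
    by (simp add: sum.Sigma case_prod_unfold)
  with assms show ?thesis
    by (simp add: alpha_def sum_divide_distrib[symmetric])
qed

lemma assumptionA_ratio_convergent_or_at_top:
  fixes R :: "nat \<Rightarrow> 'e::finite \<Rightarrow> 'e \<Rightarrow> real"
  assumes A: "assumptionA R" and pos: "\<And>N. 0 < R N x y" and xy: "x \<noteq> y" and ab: "a \<noteq> b"
  shows "convergent (\<lambda>N. R N a b / R N x y) \<or> filterlim (\<lambda>N. R N a b / R N x y) at_top sequentially"
proof (cases "\<forall>N. R N a b = 0")
  case True
  then have "(\<lambda>N. R N a b / R N x y) = (\<lambda>N. 0)"
    by (simp add: fun_eq_iff)
  then show ?thesis by (simp add: convergent_const)
next
  case False
  with A ab have ab_pos: "0 < R N a b" for N
    unfolding assumptionA_def by blast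
  then have "(a, b) \<in> posB R" "(x, y) \<in> posB R"
    using ab pos xy by (auto simp: posB_def)
  from assumptionA_convergent_arctan_ratio[OF A this(2,1)] show ?thesis
    by (intro convergent_arctan_imp_convergent_or_at_top) (simp_all add: ab_pos pos)
qed

lemma tendsto_rescaled_rate:
  fixes R :: "nat \<Rightarrow> 'e::finite \<Rightarrow> 'e \<Rightarrow> real"
  assumes nonneg: "\<And>N x y. x \<noteq> y \<Longrightarrow> 0 \<le> R N x y" and A: "assumptionA R" and xy: "x \<noteq> y"
  shows "(\<lambda>N. alpha R N * R N x y) \<longlonglongrightarrow> Rlim R x y"
proof -
  have "convergent (\<lambda>N. alpha R N * R N x y)"
  proof (cases "\<forall>N. R N x y = 0")
    case False
    with A xy have pos: "0 < R N x y" for N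
      unfolding assumptionA_def by blast
    have "convergent (\<lambda>N. 1 / (\<Sum>q\<in>(SIGMA a:UNIV. UNIV - {a}). R N (fst q) (snd q) / R N x y))"
      by (rule convergent_inverse_sum[where p = "(x, y)"])
         (use xy pos in \<open>auto intro!: assumptionA_ratio_convergent_or_at_top[OF A pos xy]
           divide_nonneg_pos nonneg simp: less_imp_neq[symmetric]\<close>)
    moreover have "alpha R N * R N x y
        = 1 / (\<Sum>q\<in>(SIGMA a:UNIV. UNIV - {a}). R N (fst q) (snd q) / R N x y)" for N
      using pos[of N] by (intro alpha_mult_rate_eq) simp
    ultimately show ?thesis by simp
  qed (simp add: convergent_const)
  then show ?thesis
    by (simp add: Rlim_def convergent_LIMSEQ_iff)
qed

lemma alpha_pos:
  fixes R :: "nat \<Rightarrow> 'e::finite \<Rightarrow> 'e \<Rightarrow> real"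
  assumes nonneg: "\<And>x y. x \<noteq> y \<Longrightarrow> 0 \<le> R N x y" and irred: "irreducible (R N)"
    and xy: "(x :: 'e) \<noteq> y"
  shows "0 < alpha R N"
proof -
  have "(x, y) \<in> {(a, b). a \<noteq> b \<and> 0 < R N a b}\<^sup>*"
    using irred unfolding irreducible_def by blast
  then obtain z where "(x, z) \<in> {(a, b). a \<noteq> b \<and> 0 < R N a b}"
    using xy by (cases rule: converse_rtranclE) auto
  then have "0 < (\<Sum>b\<in>UNIV - {x}. R N x b)"
    by (intro sum_pos2[of _ z]) (auto intro: nonneg)
  also have "\<dots> \<le> (\<Sum>a\<in>UNIV. \<Sum>b\<in>UNIV - {a}. R N a b)"
    by (rule member_le_sum) (auto intro!: sum_nonneg nonneg)
  finally show ?thesis by (simp add: alpha_def)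
qed

text \<open>No positivity is needed: if all rates vanish, then alpha R N = 1 / 0 = 0.\<close>
lemma abs_alpha_generator_le_1:
  fixes R :: "nat \<Rightarrow> 'e::finite \<Rightarrow> 'e \<Rightarrow> real"
  assumes nonneg: "\<And>x y. x \<noteq> y \<Longrightarrow> 0 \<le> R N x y"
  shows "\<bar>alpha R N * generator (R N) x y\<bar> \<le> 1"
proof -
  define total where "total = (\<Sum>a\<in>UNIV. \<Sum>b\<in>UNIV - {a}. R N a b)"
  have row: "0 \<le> (\<Sum>b\<in>UNIV - {x}. R N x b)" "(\<Sum>b\<in>UNIV - {x}. R N x b) \<le> total"
    unfolding total_def by (auto intro!: sum_nonneg member_le_sum nonneg)
  have "\<bar>generator (R N) x y\<bar> \<le> total"
  proof (cases "x = y")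
    case False
    have "R N x y \<le> (\<Sum>b\<in>UNIV - {x}. R N x b)"
      using False by (intro member_le_sum) (auto intro: nonneg)
    then show ?thesis using False row nonneg[OF False] by (simp add: generator_def)
  qed (use row in \<open>simp add: generator_def\<close>)
  then show ?thesis
    by (cases "total = 0") (simp_all add: alpha_def total_def[symmetric] abs_mult field_simps)
qed

lemma eventually_trans_fn_ge:
  fixes R :: "nat \<Rightarrow> 'e::finite \<Rightarrow> 'e \<Rightarrow> real" and \<alpha> :: "nat \<Rightarrow> real"
  assumes bound: "\<And>N x y. \<bar>\<alpha> N * generator (R N) x y\<bar> \<le> 1"
    and lim: "(\<lambda>N. \<alpha> N * R N a b) \<longlonglongrightarrow> L" and r: "r < L" and ab: "a \<noteq> b"
    and h: "0 < h" "h \<le> 1" "h * (real CARD('e) ^ 2 * exp (real CARD('e))) \<le> r / 2"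
  shows "\<forall>\<^sub>F N in sequentially. h * r / 2 \<le> trans_fn (R N) (h * \<alpha> N) a b"
  using order_tendstoD(1)[OF lim r]
proof eventually_elim
  case (elim N)
  define d where "d = real CARD('e)"
  have "(h * d)\<^sup>2 * exp (h * d) \<le> h * (h * (d\<^sup>2 * exp d))"
    using h by (simp add: d_def power_mult_distrib power2_eq_square mult_left_le_one_le)
  also have "\<dots> \<le> h * (r / 2)"
    using h by (simp add: d_def)
  moreover have "h * r \<le> h * (\<alpha> N * R N a b)"
    using elim h by (simp add: mult_left_mono)
  ultimately have "h * r - h * (r / 2) \<le> h * \<alpha> N * R N a b - (h * d)\<^sup>2 * exp (h * d)"
    by (simp add: algebra_simps)
  also have "\<dots> \<le> trans_fn (R N) (h * \<alpha> N) a b"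
    unfolding d_def by (rule trans_fn_ge_first_order[OF bound]) (use h ab in auto)
  finally show ?case by simp
qed

lemma exists_step_prob_bounded_below:
  fixes R :: "nat \<Rightarrow> 'e::finite \<Rightarrow> 'e \<Rightarrow> real" and \<alpha> :: "nat \<Rightarrow> real"
  assumes bound: "\<And>N x y. \<bar>\<alpha> N * generator (R N) x y\<bar> \<le> 1"
    and lim: "\<And>a b. a \<noteq> b \<Longrightarrow> (\<lambda>N. \<alpha> N * R N a b) \<longlonglongrightarrow> Q a b"
  shows "\<exists>h>0. \<exists>p>0. \<forall>a b. a \<noteq> b \<and> 0 < Q a b \<longrightarrow>
    (\<forall>\<^sub>F N in sequentially. p \<le> trans_fn (R N) (h * \<alpha> N) a b)"
proof -
  define G where "G = {(a, b). a \<noteq> b \<and> 0 < Q a b}"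
  define r where "r = Min (insert 1 (case_prod Q ` G)) / 2"
  have "0 < Min (insert 1 (case_prod Q ` G))"
    by (auto simp: G_def)
  moreover have "Min (insert 1 (case_prod Q ` G)) \<le> Q a b" if "(a, b) \<in> G" for a b
    using that by (intro Min_le) auto
  ultimately have r: "0 < r" "\<And>a b. (a, b) \<in> G \<Longrightarrow> r < Q a b"
    unfolding r_def by fastforce+
  define C where "C = real CARD('e) ^ 2 * exp (real CARD('e))"
  define h where "h = min 1 (r / (2 * C))"
  have "0 < C" by (simp add: C_def)
  then have h: "0 < h" "h \<le> 1" "h * C \<le> r / 2"
    using r(1) by (auto simp: h_def min_def field_simps)
  have "\<forall>a b. a \<noteq> b \<and> 0 < Q a b \<longrightarrow>
      (\<forall>\<^sub>F N in sequentially. h * r / 2 \<le> trans_fn (R N) (h * \<alpha> N) a b)"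
  proof (intro allI impI)
    fix a b assume "a \<noteq> b \<and> 0 < Q a b"
    then show "\<forall>\<^sub>F N in sequentially. h * r / 2 \<le> trans_fn (R N) (h * \<alpha> N) a b"
      by (intro eventually_trans_fn_ge[OF bound lim]) (use h r(2) in \<open>auto simp: G_def C_def\<close>)
  qed
  moreover have "0 < h * r / 2"
    using h r by simp
  ultimately show ?thesis
    using h(1) by blast
qed

section \<open>Absorption into the recurrent classes\<close>

lemma exists_recurrent_state_reachable:
  fixes Q :: "'e::finite \<Rightarrow> 'e \<Rightarrow> real"
  shows "\<exists>e\<in>recurrent_states Q. (x, e) \<in> reach Q"
proof -
  define succs where "succs y = {z. (y, z) \<in> reach Q}" for y
  have trans: "(a, b) \<in> reach Q \<Longrightarrow> (b, c) \<in> reach Q \<Longrightarrow> (a, c) \<in> reach Q" for a b c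
    unfolding reach_def by (rule rtrancl_trans)
  \<comment> \<open>a state reachable from x with the fewest successors is recurrent\<close>
  obtain y where y: "(x, y) \<in> reach Q"
    and y_min: "\<And>z. (x, z) \<in> reach Q \<Longrightarrow> card (succs y) \<le> card (succs z)"
    using ex_has_least_nat[of "\<lambda>y. (x, y) \<in> reach Q" x "\<lambda>y. card (succs y)"]
    by (auto simp: reach_def)
  have "y \<in> recurrent_states Q"
    unfolding recurrent_states_def
  proof (intro CollectI allI impI)
    fix z assume yz: "(y, z) \<in> reach Q"
    have "succs z \<subseteq> succs y"
      unfolding succs_def using trans[OF yz] by blast
    moreover have "card (succs y) \<le> card (succs z)"
      using y_min trans[OF y yz] by blast
    ultimately have "succs z = succs y"
      by (intro card_subset_eq finite) (auto intro: le_antisym[OF card_mono[OF finite]])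
    moreover have "y \<in> succs y"
      by (simp add: succs_def reach_def)
    ultimately show "(z, y) \<in> reach Q"
      by (auto simp: succs_def)
  qed
  with y show ?thesis by blast
qed

lemma limsup_tendsto_zero_at_top:
  fixes F :: "real \<Rightarrow> nat \<Rightarrow> real"
  assumes nonneg: "\<And>t N. 0 \<le> F t N" and c: "0 \<le> c" "c < 1"
    and bound: "\<And>k. \<forall>\<^sub>F t in at_top. \<forall>\<^sub>F N in sequentially. F t N \<le> c ^ k"
  shows "((\<lambda>t. limsup (\<lambda>N. ereal (F t N))) \<longlongrightarrow> 0) at_top"
proof (rule order_tendstoI)
  fix a :: ereal assume "a < 0"
  have "0 \<le> limsup (\<lambda>N. ereal (F t N))" for t
    by (rule le_Limsup) (simp_all add: nonneg)
  with \<open>a < 0\<close> show "\<forall>\<^sub>F t in at_top. a < limsup (\<lambda>N. ereal (F t N))"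
    by (auto intro: always_eventually less_le_trans)
next
  fix a :: ereal assume "0 < a"
  have "(\<lambda>k. ereal (c ^ k)) \<longlonglongrightarrow> 0"
    using LIMSEQ_power_zero[of c] c by (simp add: zero_ereal_def)
  from order_tendstoD(2)[OF this \<open>0 < a\<close>] obtain k where k: "ereal (c ^ k) < a"
    by (auto simp: eventually_sequentially)
  from bound[of k] show "\<forall>\<^sub>F t in at_top. limsup (\<lambda>N. ereal (F t N)) < a"
  proof eventually_elim
    case (elim t)
    then have "limsup (\<lambda>N. ereal (F t N)) \<le> ereal (c ^ k)"
      by (intro Limsup_bounded) (auto elim: eventually_mono)
    with k show ?case by simp
  qed
qed

theorem mainTheorem16:
  fixes R :: "nat \<Rightarrow> 'e::finite \<Rightarrow> 'e \<Rightarrow> real"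
    and M :: "nat \<Rightarrow> 'e \<Rightarrow> 'a measure"
    and X :: "nat \<Rightarrow> 'e \<Rightarrow> real \<Rightarrow> 'a \<Rightarrow> 'e"
    and \<eta> :: 'e
  assumes nonneg: "\<And>N x y. x \<noteq> y \<Longrightarrow> R N x y \<ge> 0"
    and irred: "\<And>N. irreducible (R N)"
    and A: "assumptionA R"
    and chain: "\<And>N \<xi>. ctmc (R N) \<xi> (M N \<xi>) (X N \<xi>)"
    and transient: "\<eta> \<in> UNIV - recurrent_states (Rlim R)"
  shows "((\<lambda>t. limsup (\<lambda>N. ereal (measure (M N \<eta>)
            {\<omega> \<in> space (M N \<eta>). hit (X N \<eta>) (recurrent_states (Rlim R)) \<omega> \<ge> ereal (t * alpha R N)})))
          \<longlongrightarrow> 0) at_top"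
proof -
  define E where "E = recurrent_states (Rlim R)"
  define G where "G = {(a, b). a \<noteq> b \<and> 0 < Rlim R a b}"
  obtain h p where h: "0 < h" and p: "0 < p" and edge:
    "\<forall>a b. a \<noteq> b \<and> 0 < Rlim R a b \<longrightarrow> (\<forall>\<^sub>F N in sequentially. p \<le> trans_fn (R N) (h * alpha R N) a b)"
    using exists_step_prob_bounded_below[OF abs_alpha_generator_le_1 tendsto_rescaled_rate[OF nonneg A]]
      nonneg by blast
  obtain e where "e \<in> E" "(\<eta>, e) \<in> reach (Rlim R)"
    using exists_recurrent_state_reachable unfolding E_def by blast
  with transient have alpha: "0 < alpha R N" for N
    by (intro alpha_pos[where x = \<eta> and y = e] nonneg irred) (auto simp: E_def)
  have escape: "\<exists>e. e \<notin> - E \<and> (x, e) \<in> G\<^sup>*" for x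
    using exists_recurrent_state_reachable[of "Rlim R" x] by (auto simp: E_def G_def reach_def)
  obtain m \<epsilon> where \<epsilon>: "0 < \<epsilon>" "\<epsilon> \<le> 1" and decay: "\<And>k. \<forall>\<^sub>F N in sequentially.
      \<forall>x\<in>- E. survival (trans_fn (R N) (h * alpha R N)) (- E) (k * m) x \<le> (1 - \<epsilon>) ^ k"
    using survival_decays_geometrically[of "\<lambda>N. trans_fn (R N) (h * alpha R N)" G p "- E"]
      trans_fn_nonneg[OF chain] sum_trans_fn_le_1[OF chain] edge p h alpha escape
    by (auto simp: G_def less_imp_le)
  show ?thesis
    unfolding E_def[symmetric]
  proof (rule limsup_tendsto_zero_at_top)
    show "\<forall>\<^sub>F t in at_top. \<forall>\<^sub>F N in sequentially. measure (M N \<eta>)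
        {\<omega> \<in> space (M N \<eta>). ereal (t * alpha R N) \<le> hit (X N \<eta>) E \<omega>} \<le> (1 - \<epsilon>) ^ k" for k
      using transient by (intro eventually_hit_tail_le[OF chain alpha h _ decay]) (simp add: E_def)
  qed (use \<epsilon> in auto)
qed

end
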